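(* Let $p$ and $\ell$ be positive integers, let $\bar J_1,\dots,\bar J_p\in\mathcal{E}^+(X)$, and let $\bar J(x)=\min_{i=1,\dots,p}\bar J_i(x)$ for all $x\in X$. Then: (a) For all $x\in X$, $$\min_{u\in U(x)}\big\{g(x,u)+(T^{\ell-1}\bar J)(f(x,u))\big\}=\min_{i=1,\dots,p}\Big[\min_{u\in U(x)}\big\{g(x,u)+(T^{\ell-1}\bar J_i)(f(x,u))\big\}\Big],$$ equivalently $(T^\ell\bar J)(x)=\min_{i=1,\dots,p}(T^\ell\bar J_i)(x)$. (b) For all $x\in X$, $\tilde U(T^{\ell-1}\bar J,x)=\bigcup_{i\in\tilde I(\ell,x)}\tilde U(T^{\ell-1}\bar J_i,x)$, where $\tilde I(\ell,x)=\arg\min_{i=1,\dots,p}(T^\ell\bar J_i)(x)$.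
   Context: Setting: $X$ (state space) and $U$ (control space) are sets; for each $x\in X$, $U(x)\subset U$ is nonempty; $f:X\times U\to X$; the stage cost $g$ satisfies $0\le g(x,u)\le\infty$ for all $x\in X$, $u\in U(x)$. $\mathcal{E}^+(X)$ denotes the set of all functions $J:X\to[0,\infty]$. The Bellman operator $T:\mathcal{E}^+(X)\to\mathcal{E}^+(X)$ is $(TJ)(x)=\inf_{u\in U(x)}\{g(x,u)+J(f(x,u))\}$; $T^\ell$ is its $\ell$-fold composition, with $T^0J=J$. Standing assumption: for every $J\in\mathcal{E}^+(X)$ and every $x\in X$, the infimum defining $(TJ)(x)$ is attained. For $J\in\mathcal{E}^+(X)$ and $x\in X$, $\tilde U(J,x)=\arg\min_{u\in U(x)}\{g(x,u)+J(f(x,u))\}$. *)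

theory Defs
  imports "HOL-Library.Extended_Nonnegative_Real"
begin

text \<open>Functions J : X -> [0,infinity] are modelled as functions into ennreal.
  U x is the control constraint set, f the system function, g the stage cost.\<close>

definition bellman ::
  "('x \<Rightarrow> 'u set) \<Rightarrow> ('x \<Rightarrow> 'u \<Rightarrow> 'x) \<Rightarrow> ('x \<Rightarrow> 'u \<Rightarrow> ennreal)
   \<Rightarrow> ('x \<Rightarrow> ennreal) \<Rightarrow> ('x \<Rightarrow> ennreal)" where
  "bellman U f g J = (\<lambda>x. (INF u\<in>U x. g x u + J (f x u)))"

definition inf_attained ::
  "('x \<Rightarrow> 'u set) \<Rightarrow> ('x \<Rightarrow> 'u \<Rightarrow> 'x) \<Rightarrow> ('x \<Rightarrow> 'u \<Rightarrow> ennreal) \<Rightarrow> bool" where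
  "inf_attained U f g = (\<forall>J x. \<exists>u\<in>U x. g x u + J (f x u) = bellman U f g J x)"

definition Utilde ::
  "('x \<Rightarrow> 'u set) \<Rightarrow> ('x \<Rightarrow> 'u \<Rightarrow> 'x) \<Rightarrow> ('x \<Rightarrow> 'u \<Rightarrow> ennreal)
   \<Rightarrow> ('x \<Rightarrow> ennreal) \<Rightarrow> 'x \<Rightarrow> 'u set" where
  "Utilde U f g J x = {u \<in> U x. \<forall>v\<in>U x. g x u + J (f x u) \<le> g x v + J (f x v)}"

end

theory Submission
  imports Defs
begin

text \<open>Since addition is monotone and infima commute with each other, the Bellman operator
  commutes with finite pointwise minima, and hence so do its iterates: this is (a).
  For (b), a control minimises the pointwise minimum of finitely many Q-factors exactly when
  it minimises one Q-factor whose optimal value is the smallest of all.\<close>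

lemma INF_Min_commute:
  fixes Q :: "'i \<Rightarrow> 'u \<Rightarrow> 'a::complete_linorder"
  assumes "finite I" "I \<noteq> {}"
  shows "(INF u\<in>A. Min ((\<lambda>i. Q i u) ` I)) = Min ((\<lambda>i. INF u\<in>A. Q i u) ` I)"
  using assms by (simp add: Min_Inf INF_commute[of _ A I])

lemma add_Min_commute:
  fixes c :: "'a::{ordered_ab_semigroup_add, linorder}"
  assumes "finite I" "I \<noteq> {}"
  shows "c + Min (h ` I) = Min ((\<lambda>i. c + h i) ` I)"
proof -
  have "mono ((+) c)" by (simp add: add_left_mono monoI)
  then show ?thesis
    using mono_Min_commute[of "(+) c" "h ` I"] assms by (simp add: image_image)
qed

definition argmins :: "'a set \<Rightarrow> ('a \<Rightarrow> 'b::order) \<Rightarrow> 'a set" where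
  "argmins A h = {a \<in> A. \<forall>b\<in>A. h a \<le> h b}"

lemma argmins_eq_le_INF:
  fixes h :: "'a \<Rightarrow> 'b::complete_lattice"
  shows "argmins A h = {a \<in> A. h a \<le> (INF b\<in>A. h b)}"
  by (auto simp: argmins_def le_INF_iff)

lemma argmins_Min_eq_Union_argmins:
  fixes Q :: "'i \<Rightarrow> 'u \<Rightarrow> 'a::complete_linorder"
  assumes I: "finite I" "I \<noteq> {}"
  shows "argmins A (\<lambda>u. Min ((\<lambda>i. Q i u) ` I))
       = (\<Union>i\<in>argmins I (\<lambda>i. INF u\<in>A. Q i u). argmins A (Q i))"
proof -
  define m where "m = Min ((\<lambda>i. INF u\<in>A. Q i u) ` I)"
  have m_le: "m \<le> (INF u\<in>A. Q i u)" if "i \<in> I" for i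
    unfolding m_def using I that by simp
  have lhs: "argmins A (\<lambda>u. Min ((\<lambda>i. Q i u) ` I)) = {u \<in> A. Min ((\<lambda>i. Q i u) ` I) \<le> m}"
    unfolding argmins_eq_le_INF m_def INF_Min_commute[OF I] ..
  show ?thesis
  proof (intro set_eqI iffI)
    fix u assume "u \<in> argmins A (\<lambda>u. Min ((\<lambda>i. Q i u) ` I))"
    then have u: "u \<in> A" "Min ((\<lambda>i. Q i u) ` I) \<le> m" by (auto simp: lhs)
    have "Min ((\<lambda>i. Q i u) ` I) \<in> (\<lambda>i. Q i u) ` I"
      using I by (intro Min_in) auto
    then obtain i where i: "i \<in> I" "Q i u = Min ((\<lambda>i. Q i u) ` I)"
      by (metis imageE)
    have "(INF v\<in>A. Q i v) \<le> m"
      using INF_lower[OF u(1), of "Q i"] u(2) i(2) by simp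
    then have "i \<in> argmins I (\<lambda>i. INF u\<in>A. Q i u)"
      using i(1) m_le order_trans unfolding argmins_def by blast
    moreover have "u \<in> argmins A (Q i)"
      using u i m_le[OF i(1)] unfolding argmins_eq_le_INF by simp
    ultimately show "u \<in> (\<Union>i\<in>argmins I (\<lambda>i. INF u\<in>A. Q i u). argmins A (Q i))" by blast
  next
    fix u assume "u \<in> (\<Union>i\<in>argmins I (\<lambda>i. INF u\<in>A. Q i u). argmins A (Q i))"
    then obtain i where i: "i \<in> argmins I (\<lambda>i. INF u\<in>A. Q i u)" and u: "u \<in> argmins A (Q i)"
      by blast
    have "(INF v\<in>A. Q i v) = m"
      using i I m_le unfolding m_def argmins_def by (intro antisym) (auto simp: Min_ge_iff)
    moreover have "Min ((\<lambda>k. Q k u) ` I) \<le> Q i u"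
      using i I unfolding argmins_def by simp
    ultimately show "u \<in> argmins A (\<lambda>u. Min ((\<lambda>i. Q i u) ` I))"
      using u unfolding lhs by (auto simp: argmins_eq_le_INF)
  qed
qed

lemma Utilde_eq_argmins: "Utilde U f g J x = argmins (U x) (\<lambda>u. g x u + J (f x u))"
  unfolding Utilde_def argmins_def ..

lemma funpow_bellman_Suc:
  "(bellman U f g ^^ Suc k) J x = (INF u\<in>U x. g x u + (bellman U f g ^^ k) J (f x u))"
  by (simp add: bellman_def)

lemma bellman_Min:
  assumes "finite I" "I \<noteq> {}"
  shows "bellman U f g (\<lambda>y. Min ((\<lambda>i. J i y) ` I)) x = Min ((\<lambda>i. bellman U f g (J i) x) ` I)"
proof -
  have "bellman U f g (\<lambda>y. Min ((\<lambda>i. J i y) ` I)) x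
      = (INF u\<in>U x. Min ((\<lambda>i. g x u + J i (f x u)) ` I))"
    unfolding bellman_def
    by (intro INF_cong refl add_Min_commute[OF assms, where h = "\<lambda>i. J i (f x _)"])
  then show ?thesis
    unfolding bellman_def by (simp add: INF_Min_commute[OF assms])
qed

lemma funpow_bellman_Min:
  assumes "finite I" "I \<noteq> {}"
  shows "(bellman U f g ^^ k) (\<lambda>y. Min ((\<lambda>i. J i y) ` I))
       = (\<lambda>y. Min ((\<lambda>i. (bellman U f g ^^ k) (J i) y) ` I))"
proof (induction k)
  case 0
  show ?case by simp
next
  case (Suc k)
  show ?case
    using bellman_Min[OF assms, of U f g "\<lambda>i. (bellman U f g ^^ k) (J i)"] by (simp add: Suc.IH)
qed

theorem corollary1:
  fixes U :: "'x \<Rightarrow> 'u set" and f :: "'x \<Rightarrow> 'u \<Rightarrow> 'x" and g :: "'x \<Rightarrow> 'u \<Rightarrow> ennreal"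
    and p l :: nat and Jb :: "nat \<Rightarrow> 'x \<Rightarrow> ennreal" and J :: "'x \<Rightarrow> ennreal"
  assumes U_ne: "\<And>x. U x \<noteq> {}"
    and attained: "inf_attained U f g"
    and p_pos: "p \<ge> 1" and l_pos: "l \<ge> 1"
    and J_def: "\<And>x. J x = Min ((\<lambda>i. Jb i x) ` {1..p})"
  shows "(\<forall>x. (INF u\<in>U x. g x u + (bellman U f g ^^ (l - 1)) J (f x u))
              = Min ((\<lambda>i. INF u\<in>U x. g x u + (bellman U f g ^^ (l - 1)) (Jb i) (f x u)) ` {1..p})
            \<and> (bellman U f g ^^ l) J x = Min ((\<lambda>i. (bellman U f g ^^ l) (Jb i) x) ` {1..p}))
       \<and> (\<forall>x. Utilde U f g ((bellman U f g ^^ (l - 1)) J) x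
              = (\<Union>i\<in>{i \<in> {1..p}. \<forall>k\<in>{1..p}. (bellman U f g ^^ l) (Jb i) x \<le> (bellman U f g ^^ l) (Jb k) x}.
                   Utilde U f g ((bellman U f g ^^ (l - 1)) (Jb i)) x))"
proof -
  let ?T = "bellman U f g"
  have I: "finite {1..p}" "{1..p} \<noteq> {}" using p_pos by auto
  have l: "l = Suc (l - 1)" using l_pos by simp
  have "J = (\<lambda>y. Min ((\<lambda>i. Jb i y) ` {1..p}))" using J_def by (simp add: fun_eq_iff)
  then have iterate: "(?T ^^ k) J = (\<lambda>y. Min ((\<lambda>i. (?T ^^ k) (Jb i) y) ` {1..p}))" for k
    using funpow_bellman_Min[OF I] by simp
  have T_l: "(?T ^^ l) K x = (INF u\<in>U x. g x u + (?T ^^ (l - 1)) K (f x u))" for K x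
    by (subst l) (rule funpow_bellman_Suc)
  have Q_min: "g x u + (?T ^^ (l - 1)) J (f x u)
      = Min ((\<lambda>i. g x u + (?T ^^ (l - 1)) (Jb i) (f x u)) ` {1..p})" for x u
    unfolding iterate by (rule add_Min_commute[OF I])
  have "(INF u\<in>U x. g x u + (?T ^^ (l - 1)) J (f x u))
      = Min ((\<lambda>i. INF u\<in>U x. g x u + (?T ^^ (l - 1)) (Jb i) (f x u)) ` {1..p})" for x
    unfolding Q_min by (rule INF_Min_commute[OF I])
  moreover have "Utilde U f g ((?T ^^ (l - 1)) J) x
      = (\<Union>i\<in>{i \<in> {1..p}. \<forall>k\<in>{1..p}. (?T ^^ l) (Jb i) x \<le> (?T ^^ l) (Jb k) x}.
           Utilde U f g ((?T ^^ (l - 1)) (Jb i)) x)" for x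
    unfolding Utilde_eq_argmins Q_min argmins_Min_eq_Union_argmins[OF I] T_l
    by (simp only: argmins_def)
  ultimately show ?thesis
    using iterate by simp
qed

end
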